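(* Let $u\in V$ satisfy $\operatorname{dist}(u,\mathcal M)\le\varepsilon_{model}$. Let $w=P_Wu+\eta$ with $\eta\in W$ and $\|\eta\|\le\varepsilon_{noise}$. Let $(u^*,y^* )\in(w+W^\perp)\times Y$ be a global minimizer of $(v,y)\mapsto\mathcal R(v,y)$ over $(w+W^\perp)\times Y$. Then, with $\varepsilon:=\kappa(\varepsilon_{model}+\varepsilon_{noise})$ and $\kappa=R/r$, $$\|u^*-u(y^* )\|\le\varepsilon\qquad\text{and}\qquad\|u-u^*\|\le\varepsilon_{noise}+\delta_\varepsilon\le2\delta_\varepsilon.$$ In particular, if $u\in\mathcal M$ and $\eta=0$, then $\|u-u^*\|\le\delta_0$.
   Context: Let $V$ and $Z$ be real Hilbert spaces, with $\|\cdot\|$ the norm of $V$ and $Z'$ the dual of $Z$. Let $Y\subset\mathbb R^d$ be compact. For $y\in Y$ let $A(y):V\to Z'$ be a bounded linear isomorphism and $f(y)\in Z'$, with $y\mapsto A(y)$ and $y\mapsto f(y)$ continuous. Assume there are constants $0<r\le R$ such that $\|A(y)\|_{V\to Z'}\le R$ and $\|A(y)^{-1}\|_{Z'\to V}\le r^{-1}$ for all $y\in Y$. Let $u(y)=A(y)^{-1}f(y)$ and $\mathcal M=\{u(y):y\in Y\}$. Define the residual $\mathcal R(v,y)=\|A(y)v-f(y)\|_{Z'}$. Let $W\subset V$ be a subspace of finite dimension $m$, let $P_W$ be the orthogonal projection onto $W$, and let $W^\perp$ be its orthogonal complement. Assume $W^\perp\ne\{0\}$. For $\sigma\ge0$ define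 $\mathcal M_\sigma=\{v:\operatorname{dist}(v,\mathcal M)\le\sigma\}$ and $\delta_\sigma=\sup\{\|u-v\|:u,v\in\mathcal M_\sigma,u-v\in W^\perp\}$. *)

theory Defs
  imports "HOL-Analysis.Analysis"
begin

definition orth_proj :: "'v::real_inner set \<Rightarrow> 'v \<Rightarrow> 'v" where
  "orth_proj W u = (THE p. p \<in> W \<and> u - p \<in> orthogonal_comp W)"

definition nbhd_set :: "'v::real_normed_vector set \<Rightarrow> real \<Rightarrow> 'v set" where
  "nbhd_set M \<sigma> = {v. infdist v M \<le> \<sigma>}"

definition delta_sigma :: "'v::real_inner set \<Rightarrow> 'v set \<Rightarrow> real \<Rightarrow> real" where
  "delta_sigma M W \<sigma> = Sup {norm (u - v) | u v. u \<in> nbhd_set M \<sigma> \<and> v \<in> nbhd_set M \<sigma>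
                                    \<and> u - v \<in> orthogonal_comp W}"

end

theory Submission
  imports Defs
begin

text \<open>The point u + \<eta> lies in the admissible affine space w + W-perp, and its residual at any
  parameter y is at most R times its distance to u(y); so the minimal residual is at most
  R (eps_model + eps_noise), and the inverse bound 1/r turns this into the estimate of
  u* - u(y*). Hence u + \<eta> and u* both lie in the \<epsilon>-neighbourhood of the solution manifold and
  differ by an element of W-perp, so they are at distance at most \<delta>(\<epsilon>). Finally \<epsilon> \<le> \<delta>(\<epsilon>),
  as the neighbourhood contains the translates of a solution by vectors of W-perp of length \<epsilon>.\<close>

lemma finite_span_orthogonal_decomp:
  fixes B :: "'v::real_inner set"
  assumes "finite B"
  shows "\<exists>p\<in>span B. \<forall>x\<in>B. inner (u - p) x = 0"
  using assms
proof (induction B arbitrary: u)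
  case empty
  then show ?case by (auto intro: span_zero)
next
  case (insert b B)
  obtain p where p: "p \<in> span B" "\<forall>x\<in>B. inner (u - p) x = 0"
    using insert.IH by blast
  obtain q where q: "q \<in> span B" "\<forall>x\<in>B. inner (b - q) x = 0"
    using insert.IH by blast
  \<comment> \<open>Gram-Schmidt: b' is orthogonal to B, and p' corrects p along b'.\<close>
  define b' where "b' = b - q"
  define p' where "p' = p + (inner b' (u - p) / inner b' b') *\<^sub>R b'"
  have "span B \<subseteq> span (insert b B)"
    by (simp add: span_mono subset_insertI)
  then have "p' \<in> span (insert b B)"
    unfolding p'_def b'_def
    by (meson p(1) q(1) span_add span_diff span_mul span_base insertI1 subsetD)
  moreover have orth_B: "inner (u - p') x = 0" if "x \<in> B" for x
    using p(2) q(2) that by (simp add: p'_def b'_def inner_diff_left inner_add_left)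
  have "inner (u - p') x = 0" if "x \<in> span B" for x
    using that orth_B orthogonal_to_span unfolding orthogonal_def by blast
  moreover have "inner (u - p') b' = 0"
  proof (cases "b' = 0")
    case False
    have "inner (u - p') b' = inner (u - p) b' - (inner b' (u - p) / inner b' b') * inner b' b'"
      by (simp add: p'_def inner_add_left algebra_simps)
    with False show ?thesis
      by (simp add: inner_commute)
  qed simp
  ultimately show ?case
    using q(1) span_base[of _ B] unfolding b'_def by (auto simp: inner_diff_right)
qed

lemma orth_proj_span:
  fixes B :: "'v::real_inner set"
  assumes "finite B"
  shows "orth_proj (span B) u \<in> span B"
    and "u - orth_proj (span B) u \<in> orthogonal_comp (span B)"
proof -
  obtain p where p: "p \<in> span B" "\<forall>x\<in>B. inner (u - p) x = 0"
    using finite_span_orthogonal_decomp[OF assms] by blast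
  have p_perp: "u - p \<in> orthogonal_comp (span B)"
    using p(2) orthogonal_to_span orthogonal_commute
    unfolding orthogonal_comp_def orthogonal_def by blast
  have "\<exists>!p. p \<in> span B \<and> u - p \<in> orthogonal_comp (span B)"
  proof (rule ex1I[of _ p])
    fix p' assume p': "p' \<in> span B \<and> u - p' \<in> orthogonal_comp (span B)"
    have "p - p' \<in> span B"
      using p' p(1) by (simp add: span_diff)
    moreover have "p - p' \<in> orthogonal_comp (span B)"
      using subspace_diff[OF subspace_orthogonal_comp, of "u - p'" _ "u - p"] p' p_perp by simp
    ultimately show "p' = p"
      unfolding orthogonal_comp_def orthogonal_def by auto
  qed (use p(1) p_perp in blast)
  then show "orth_proj (span B) u \<in> span B" "u - orth_proj (span B) u \<in> orthogonal_comp (span B)"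
    unfolding orth_proj_def by (metis (mono_tags, lifting) theI')+
qed

lemma infdist_ge:
  assumes "A \<noteq> {}" "\<And>a. a \<in> A \<Longrightarrow> d \<le> dist x a"
  shows "d \<le> infdist x A"
  unfolding infdist_notempty[OF assms(1)] by (rule cINF_greatest) (use assms in auto)

lemma bounded_nbhd_set:
  fixes M :: "'v::real_normed_vector set"
  assumes "bounded M" "M \<noteq> {}"
  shows "bounded (nbhd_set M \<sigma>)"
proof -
  obtain K where K: "\<And>m. m \<in> M \<Longrightarrow> norm m \<le> K"
    using assms(1) unfolding bounded_iff by blast
  have "norm a \<le> K + \<sigma>" if "a \<in> nbhd_set M \<sigma>" for a
  proof -
    have "norm a - K \<le> dist a m" if "m \<in> M" for m
      using K[OF that] norm_triangle_ineq2[of a m] by (simp add: dist_norm)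
    then have "norm a - K \<le> infdist a M"
      using infdist_ge[OF assms(2)] by blast
    with \<open>a \<in> nbhd_set M \<sigma>\<close> show ?thesis
      unfolding nbhd_set_def by simp
  qed
  then show ?thesis
    unfolding bounded_iff by blast
qed

lemma norm_diff_le_delta_sigma:
  fixes M W :: "'v::real_inner set"
  assumes "bounded M" "M \<noteq> {}"
    and "a \<in> nbhd_set M \<sigma>" "b \<in> nbhd_set M \<sigma>" "a - b \<in> orthogonal_comp W"
  shows "norm (a - b) \<le> delta_sigma M W \<sigma>"
proof -
  obtain K where K: "\<And>x. x \<in> nbhd_set M \<sigma> \<Longrightarrow> norm x \<le> K"
    using bounded_nbhd_set[OF assms(1,2)] unfolding bounded_iff by blast
  have "norm (a - b) \<le> 2 * K" if "a \<in> nbhd_set M \<sigma>" "b \<in> nbhd_set M \<sigma>" for a b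
    using norm_triangle_ineq4[of a b] K[OF that(1)] K[OF that(2)] by linarith
  then have "bdd_above {norm (a - b) | a b. a \<in> nbhd_set M \<sigma> \<and> b \<in> nbhd_set M \<sigma>
                                    \<and> a - b \<in> orthogonal_comp W}"
    by (intro bdd_aboveI[of _ "2 * K"]) blast
  then show ?thesis
    unfolding delta_sigma_def by (rule cSup_upper[rotated]) (use assms(3-5) in blast)
qed

lemma delta_sigma_ge:
  fixes M W :: "'v::real_inner set"
  assumes "bounded M" "M \<noteq> {}" "0 \<le> \<sigma>" "orthogonal_comp W \<noteq> {0}"
  shows "\<sigma> \<le> delta_sigma M W \<sigma>"
proof -
  obtain z where z: "z \<in> orthogonal_comp W" "z \<noteq> 0"
    using assms(4) subspace_0[OF subspace_orthogonal_comp] by blast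
  define z' where "z' = (\<sigma> / norm z) *\<^sub>R z"
  have "norm z' = \<sigma>"
    using z(2) assms(3) by (simp add: z'_def)
  obtain m where "m \<in> M"
    using assms(2) by blast
  then have "m + z' \<in> nbhd_set M \<sigma>" "m \<in> nbhd_set M \<sigma>"
    using infdist_le2[of m M "m + z'" \<sigma>] \<open>norm z' = \<sigma>\<close> assms(3)
    by (simp_all add: nbhd_set_def dist_norm)
  moreover have "(m + z') - m \<in> orthogonal_comp W"
    using z(1) by (simp add: z'_def subspace_scale[OF subspace_orthogonal_comp])
  ultimately show ?thesis
    using norm_diff_le_delta_sigma[OF assms(1,2)] \<open>norm z' = \<sigma>\<close> by fastforce
qed

locale parametric_problem =
  fixes Y :: "'p set"
    and A :: "'p \<Rightarrow> ('v::real_inner \<Rightarrow>\<^sub>L 'z::real_normed_vector)"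
    and f :: "'p \<Rightarrow> 'z"
    and r R :: real
  assumes A_bij: "\<And>y. y \<in> Y \<Longrightarrow> bij (blinfun_apply (A y))"
    and A_inv_bl: "\<And>y. y \<in> Y \<Longrightarrow> bounded_linear (inv (blinfun_apply (A y)))"
    and r_pos: "0 < r" and rR: "r \<le> R"
    and A_bound: "\<And>y. y \<in> Y \<Longrightarrow> norm (A y) \<le> R"
    and A_inv_bound: "\<And>y. y \<in> Y \<Longrightarrow> onorm (inv (blinfun_apply (A y))) \<le> 1 / r"
begin

definition sol :: "'p \<Rightarrow> 'v" where
  "sol y = inv (blinfun_apply (A y)) (f y)"

lemma residual_eq:
  assumes "y \<in> Y"
  shows "A y v - f y = A y (v - sol y)"
proof -
  have "A y (sol y) = f y"
    using A_bij[OF assms] unfolding sol_def by (meson bij_is_surj surj_f_inv_f)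
  then show ?thesis
    by (simp add: blinfun.diff_right)
qed

lemma residual_ge:
  assumes "y \<in> Y"
  shows "r * norm (v - sol y) \<le> norm (A y v - f y)"
proof -
  let ?B = "inv (blinfun_apply (A y))"
  have "norm (v - sol y) = norm (?B (A y (v - sol y)))"
    using A_bij[OF assms] by (simp add: bij_is_inj)
  also have "\<dots> \<le> onorm ?B * norm (A y v - f y)"
    unfolding residual_eq[OF assms] by (rule onorm[OF A_inv_bl[OF assms]])
  also have "\<dots> \<le> (1 / r) * norm (A y v - f y)"
    by (rule mult_right_mono[OF A_inv_bound[OF assms] norm_ge_zero])
  finally show ?thesis
    using r_pos by (simp add: field_simps)
qed

lemma residual_le:
  assumes "y \<in> Y"
  shows "norm (A y v - f y) \<le> R * norm (v - sol y)"
  unfolding residual_eq[OF assms]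
  using norm_blinfun[of "A y"] mult_right_mono[OF A_bound[OF assms] norm_ge_zero] order_trans
  by blast

lemma residual_lower_bound_le_infdist:
  assumes "Y \<noteq> {}" "\<And>y. y \<in> Y \<Longrightarrow> \<rho> \<le> norm (A y v - f y)"
  shows "\<rho> \<le> R * infdist v (sol ` Y)"
proof -
  have R_pos: "0 < R"
    using r_pos rR by linarith
  have "\<rho> / R \<le> dist v (sol y)" if "y \<in> Y" for y
    using assms(2)[OF that] residual_le[OF that, of v] R_pos
    by (simp add: pos_divide_le_eq dist_norm mult.commute)
  then have "\<rho> / R \<le> infdist v (sol ` Y)"
    using infdist_ge[of "sol ` Y"] assms(1) by blast
  then show ?thesis
    using R_pos by (simp add: pos_divide_le_eq mult.commute)
qed

lemma minimiser_near_sol: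
  assumes "ystar \<in> Y"
    and "\<And>y. y \<in> Y \<Longrightarrow> norm (A ystar ustar - f ystar) \<le> norm (A y v - f y)"
  shows "norm (ustar - sol ystar) \<le> R / r * infdist v (sol ` Y)"
proof -
  have "r * norm (ustar - sol ystar) \<le> R * infdist v (sol ` Y)"
    using residual_ge[OF assms(1), of ustar] residual_lower_bound_le_infdist[OF _ assms(2)] assms(1)
    by fastforce
  then show ?thesis
    using r_pos by (simp add: field_simps)
qed

lemma bounded_sol_image:
  assumes "bounded (f ` Y)"
  shows "bounded (sol ` Y)"
proof -
  obtain K where K: "\<And>y. y \<in> Y \<Longrightarrow> norm (f y) \<le> K"
    using assms unfolding bounded_iff by blast
  have "norm (sol y) \<le> K / r" if "y \<in> Y" for y
    using residual_ge[OF that, of 0] K[OF that] r_pos by (simp add: field_simps)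
  then show ?thesis
    unfolding bounded_iff by blast
qed

lemma minimiser_recovery:
  assumes "bounded (f ` Y)" "ystar \<in> Y"
    and "\<And>y. y \<in> Y \<Longrightarrow> norm (A ystar ustar - f ystar) \<le> norm (A y v - f y)"
    and "v - ustar \<in> orthogonal_comp W"
    and "infdist v (sol ` Y) \<le> \<sigma>" "R / r * infdist v (sol ` Y) \<le> \<sigma>"
  shows "norm (v - ustar) \<le> delta_sigma (sol ` Y) W \<sigma>"
proof (rule norm_diff_le_delta_sigma[OF bounded_sol_image[OF assms(1)] _ _ _ assms(4)])
  show "sol ` Y \<noteq> {}" "v \<in> nbhd_set (sol ` Y) \<sigma>"
    using assms(2,5) by (auto simp: nbhd_set_def)
  show "ustar \<in> nbhd_set (sol ` Y) \<sigma>"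
    using minimiser_near_sol[OF assms(2,3)] assms(2,6) infdist_le2[of "sol ystar" "sol ` Y" ustar \<sigma>]
    by (simp add: nbhd_set_def dist_norm)
qed

end

theorem mainTheorem8:
  fixes Y :: "(real ^ 'd) set"
    and A :: "real ^ 'd \<Rightarrow> ('v::{real_inner, complete_space} \<Rightarrow>\<^sub>L 'z::{real_inner, complete_space})"
    and f :: "real ^ 'd \<Rightarrow> 'z"
    and r R :: real
    and W :: "'v set" and m :: nat
    and u ustar w \<eta> :: 'v and ystar :: "real ^ 'd"
    and eps_model eps_noise :: real
  assumes Y_compact: "compact Y"
    and A_cont: "continuous_on Y A"
    and f_cont: "continuous_on Y f"
    and A_bij: "\<And>y. y \<in> Y \<Longrightarrow> bij (blinfun_apply (A y))"
    and A_inv_bl: "\<And>y. y \<in> Y \<Longrightarrow> bounded_linear (inv (blinfun_apply (A y)))"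
    and r_pos: "0 < r" and rR: "r \<le> R"
    and A_bound: "\<And>y. y \<in> Y \<Longrightarrow> norm (A y) \<le> R"
    and A_inv_bound: "\<And>y. y \<in> Y \<Longrightarrow> onorm (inv (blinfun_apply (A y))) \<le> 1 / r"
    and W_sub: "subspace W"
    and W_fin: "\<exists>B. finite B \<and> span B = W"
    and W_dim: "dim W = m"
    and W_perp_nontriv: "orthogonal_comp W \<noteq> {0}"
    and u_close: "infdist u ((\<lambda>y. inv (blinfun_apply (A y)) (f y)) ` Y) \<le> eps_model"
    and eta_W: "\<eta> \<in> W" and eta_small: "norm \<eta> \<le> eps_noise"
    and w_def: "w = orth_proj W u + \<eta>"
    and ustar_aff: "ustar - w \<in> orthogonal_comp W" and ystar_Y: "ystar \<in> Y"
    and minimizer: "\<And>v y. v - w \<in> orthogonal_comp W \<Longrightarrow> y \<in> Y \<Longrightarrow>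
        norm (A ystar ustar - f ystar) \<le> norm (A y v - f y)"
  shows "(let uy = (\<lambda>y. inv (blinfun_apply (A y)) (f y));
              M = uy ` Y;
              \<epsilon> = (R / r) * (eps_model + eps_noise)
          in norm (ustar - uy ystar) \<le> \<epsilon>
           \<and> norm (u - ustar) \<le> eps_noise + delta_sigma M W \<epsilon>
           \<and> eps_noise + delta_sigma M W \<epsilon> \<le> 2 * delta_sigma M W \<epsilon>
           \<and> (u \<in> M \<and> \<eta> = 0 \<longrightarrow> norm (u - ustar) \<le> delta_sigma M W 0))"
proof -
  interpret parametric_problem Y A f r R
    using A_bij A_inv_bl r_pos rR A_bound A_inv_bound by (simp add: parametric_problem_def)
  define M where "M = sol ` Y"
  define \<epsilon> where "\<epsilon> = R / r * (eps_model + eps_noise)"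
  have f_bounded: "bounded (f ` Y)"
    by (rule compact_imp_bounded[OF compact_continuous_image[OF f_cont Y_compact]])
  have M_ne: "M \<noteq> {}" and M_bounded: "bounded M"
    using ystar_Y bounded_sol_image[OF f_bounded] by (auto simp: M_def)
  have u_dist: "infdist u M \<le> eps_model"
    using u_close by (simp add: M_def sol_def[abs_def])
  have eps_nonneg: "0 \<le> eps_model" "0 \<le> eps_noise"
    using u_dist eta_small infdist_nonneg[of u M] norm_ge_zero[of \<eta>] by linarith+
  have "1 \<le> R / r"
    using r_pos rR by simp
  then have eps_le: "eps_model + eps_noise \<le> \<epsilon>"
    using mult_right_mono[of 1 "R / r" "eps_model + eps_noise"] eps_nonneg by (simp add: \<epsilon>_def)
  obtain B where B: "finite B" "span B = W"
    using W_fin by blast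
  have u_proj: "u - orth_proj W u \<in> orthogonal_comp W"
    using orth_proj_span(2)[OF B(1)] B(2) by blast
  have feasible: "x - ustar \<in> orthogonal_comp W" if "x - w = u - orth_proj W u" for x
  proof -
    have "x - ustar = (u - orth_proj W u) - (ustar - w)"
      using that by (simp add: algebra_simps)
    then show ?thesis
      using subspace_diff[OF subspace_orthogonal_comp u_proj ustar_aff] by metis
  qed
  have v_dist: "infdist (u + \<eta>) M \<le> eps_model + eps_noise"
    using infdist_triangle[of "u + \<eta>" M u] u_dist eta_small by (simp add: dist_norm)
  have v_scaled: "R / r * infdist (u + \<eta>) M \<le> \<epsilon>"
    unfolding \<epsilon>_def by (rule mult_left_mono[OF v_dist]) (use \<open>1 \<le> R / r\<close> in simp)
  have v_feasible: "(u + \<eta>) - w = u - orth_proj W u"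
    by (simp add: w_def)
  have v_min: "norm (A ystar ustar - f ystar) \<le> norm (A y (u + \<eta>) - f y)" if "y \<in> Y" for y
    using minimizer[OF _ that, of "u + \<eta>"] u_proj unfolding v_feasible .
  have sol_close: "norm (ustar - sol ystar) \<le> \<epsilon>"
    using minimiser_near_sol[OF ystar_Y v_min] v_scaled by (simp add: M_def)
  have "norm (u + \<eta> - ustar) \<le> delta_sigma M W \<epsilon>"
    using minimiser_recovery[OF f_bounded ystar_Y v_min feasible[OF v_feasible]] v_dist eps_le v_scaled
    by (simp add: M_def)
  then have recovery: "norm (u - ustar) \<le> eps_noise + delta_sigma M W \<epsilon>"
    using norm_triangle_ineq4[of "u + \<eta> - ustar" \<eta>] eta_small by simp
  have "\<epsilon> \<le> delta_sigma M W \<epsilon>"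
    using delta_sigma_ge[OF M_bounded M_ne _ W_perp_nontriv] eps_le eps_nonneg by simp
  then have doubling: "eps_noise + delta_sigma M W \<epsilon> \<le> 2 * delta_sigma M W \<epsilon>"
    using eps_le eps_nonneg by linarith
  have exact: "norm (u - ustar) \<le> delta_sigma M W 0" if "u \<in> M" "\<eta> = 0"
  proof -
    have u_feasible: "u - w = u - orth_proj W u"
      using that(2) by (simp add: w_def)
    have "infdist u M = 0"
      using that(1) by simp
    moreover have "norm (A ystar ustar - f ystar) \<le> norm (A y u - f y)" if "y \<in> Y" for y
      using minimizer[OF _ that, of u] u_proj unfolding u_feasible .
    ultimately show ?thesis
      using minimiser_recovery[OF f_bounded ystar_Y _ feasible[OF u_feasible], of 0]
      by (simp add: M_def)
  qed
  show ?thesis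
    using sol_close recovery doubling exact by (simp add: Let_def M_def \<epsilon>_def sol_def[abs_def])
qed

end
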